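(* Let $\mathcal{X},\mathcal{Y}$ be finite Markov chains and $C:{\bm X}\times{\bm Y}\to\mathbb{R}_+$ a cost function. Then for every $k\in\mathbb{N}$, $d^{(k)}_{\mathrm{WL}}(\mathcal{X},\mathcal{Y};C)=\lim_{\delta\to0}d^{\delta,(k)}_{\mathrm{WL}}(\mathcal{X},\mathcal{Y};C)$. Consequently, when $\mathcal{X},\mathcal{Y}$ are stationary, $d^{(\infty)}_{\mathrm{WL}}(\mathcal{X},\mathcal{Y};C)=\lim_{k\to\infty}\lim_{\delta\to0}d^{\delta,(k)}_{\mathrm{WL}}(\mathcal{X},\mathcal{Y};C)$.
   Context: A finite Markov chain $\mathcal{X}=({\bm X},m^{\bm X}_\bullet,\nu^{\bm X})$ consists of a finite set ${\bm X}$, a transition kernel $m^{\bm X}_\bullet:{\bm X}\to\mathcal{P}({\bm X})$ and an initial distribution $\nu^{\bm X}$; it is stationary if $\nu^{\bm X}$ is stationary for $m^{\bm X}_\bullet$. $\mathcal{C}(\alpha,\beta)$ denotes the set of couplings. A Markovian coupling between $\mathcal{X}$ and $\mathcal{Y}$ is a (possibly time-inhomogeneous) Markov chain $(X_t,Y_t)_{t\in\mathbb{N}}$ on ${\bm X}\times{\bm Y}$ with $\mathrm{law}(X_0,Y_0)\in\mathcal{C}(\nu^{\bm X},\nu^{\bm Y})$ and, for all $t,x,y$, the conditional law of $(X_{t+1},Y_{t+1})$ given $(X_t,Y_t)=(x,y)$ in $\mathcal{C}(m^{\bm X}_x,m^{\bm Y}_y)$; $\Pi(\mathcal{X},\mathcal{Y})$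 is the set of Markovian couplings. $d^{(k)}_{\mathrm{WL}}(\mathcal{X},\mathcal{Y};C)=\inf_{\Pi(\mathcal{X},\mathcal{Y})}\mathbb{E}\,C(X_k,Y_k)$ and, for stationary chains, $d^{(\infty)}_{\mathrm{WL}}=\sup_{k\in\mathbb{N}}d^{(k)}_{\mathrm{WL}}$. For $\delta\in[0,1]$ and $k\in\mathbb{N}$, $d^{\delta,(k)}_{\mathrm{WL}}(\mathcal{X},\mathcal{Y};C)=\inf_{\Pi(\mathcal{X},\mathcal{Y})}\mathbb{E}\big[\sum_{t=0}^{k-1}\delta(1-\delta)^tC(X_t,Y_t)+(1-\delta)^kC(X_k,Y_k)\big]$. *)

theory Defs
  imports "HOL-Probability.Probability"
begin

text \<open>A finite Markov chain is given by a finite type 'a (state space), a transition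
kernel m :: 'a => 'a pmf and an initial distribution nu :: 'a pmf.\<close>

definition stationary :: "('a \<Rightarrow> 'a pmf) \<Rightarrow> 'a pmf \<Rightarrow> bool" where
  "stationary m \<nu> \<longleftrightarrow> bind_pmf \<nu> m = \<nu>"

definition couplings :: "'a pmf \<Rightarrow> 'b pmf \<Rightarrow> ('a \<times> 'b) pmf set" where
  "couplings \<alpha> \<beta> = {\<pi>. map_pmf fst \<pi> = \<alpha> \<and> map_pmf snd \<pi> = \<beta>}"

definition markov_couplings ::
  "('a \<Rightarrow> 'a pmf) \<Rightarrow> 'a pmf \<Rightarrow> ('b \<Rightarrow> 'b pmf) \<Rightarrow> 'b pmf
   \<Rightarrow> (('a \<times> 'b) pmf \<times> (nat \<Rightarrow> 'a \<times> 'b \<Rightarrow> ('a \<times> 'b) pmf)) set" where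
  "markov_couplings mX \<nu>X mY \<nu>Y =
     {(\<pi>0, K). \<pi>0 \<in> couplings \<nu>X \<nu>Y \<and>
               (\<forall>t x y. K t (x, y) \<in> couplings (mX x) (mY y))}"

primrec coupling_law ::
  "('a \<times> 'b) pmf \<Rightarrow> (nat \<Rightarrow> 'a \<times> 'b \<Rightarrow> ('a \<times> 'b) pmf) \<Rightarrow> nat \<Rightarrow> ('a \<times> 'b) pmf" where
  "coupling_law \<pi>0 K 0 = \<pi>0"
| "coupling_law \<pi>0 K (Suc t) = bind_pmf (coupling_law \<pi>0 K t) (K t)"

definition exp_cost ::
  "('a \<Rightarrow> 'b \<Rightarrow> real) \<Rightarrow> ('a \<times> 'b) pmf \<Rightarrow> (nat \<Rightarrow> 'a \<times> 'b \<Rightarrow> ('a \<times> 'b) pmf) \<Rightarrow> nat \<Rightarrow> real" where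
  "exp_cost C \<pi>0 K t = measure_pmf.expectation (coupling_law \<pi>0 K t) (\<lambda>(x, y). C x y)"

definition dWL ::
  "nat \<Rightarrow> ('a \<Rightarrow> 'a pmf) \<Rightarrow> 'a pmf \<Rightarrow> ('b \<Rightarrow> 'b pmf) \<Rightarrow> 'b pmf \<Rightarrow> ('a \<Rightarrow> 'b \<Rightarrow> real) \<Rightarrow> real" where
  "dWL k mX \<nu>X mY \<nu>Y C =
     (INF p \<in> markov_couplings mX \<nu>X mY \<nu>Y. exp_cost C (fst p) (snd p) k)"

definition dWL_inf ::
  "('a \<Rightarrow> 'a pmf) \<Rightarrow> 'a pmf \<Rightarrow> ('b \<Rightarrow> 'b pmf) \<Rightarrow> 'b pmf \<Rightarrow> ('a \<Rightarrow> 'b \<Rightarrow> real) \<Rightarrow> real" where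
  "dWL_inf mX \<nu>X mY \<nu>Y C = (SUP k. dWL k mX \<nu>X mY \<nu>Y C)"

definition dWL_delta ::
  "real \<Rightarrow> nat \<Rightarrow> ('a \<Rightarrow> 'a pmf) \<Rightarrow> 'a pmf \<Rightarrow> ('b \<Rightarrow> 'b pmf) \<Rightarrow> 'b pmf \<Rightarrow> ('a \<Rightarrow> 'b \<Rightarrow> real) \<Rightarrow> real" where
  "dWL_delta \<delta> k mX \<nu>X mY \<nu>Y C =
     (INF p \<in> markov_couplings mX \<nu>X mY \<nu>Y.
        (\<Sum>t<k. \<delta> * (1 - \<delta>) ^ t * exp_cost C (fst p) (snd p) t)
        + (1 - \<delta>) ^ k * exp_cost C (fst p) (snd p) k)"

end

theory Submission
  imports Defs
begin

text \<open>For costs in \<open>[0, B]\<close>, the discounted objective of every Markovian coupling differs from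
  its undiscounted time-\<open>k\<close> cost by at most \<open>k \<delta> B\<close>, so the infima converge as \<open>\<delta> \<rightarrow> 0\<close>.
  For stationary chains, a Markovian coupling restarted after one step is again a Markovian
  coupling; hence the time-\<open>k\<close> distance is nondecreasing in \<open>k\<close>, and being bounded by \<open>B\<close> it
  converges to its supremum.\<close>

definition discounted_cost :: "real \<Rightarrow> nat \<Rightarrow> (nat \<Rightarrow> real) \<Rightarrow> real" where
  "discounted_cost \<delta> k E = (\<Sum>t<k. \<delta> * (1 - \<delta>) ^ t * E t) + (1 - \<delta>) ^ k * E k"

lemma discounted_cost_minus_eq:
  "discounted_cost \<delta> k E - E k = (\<Sum>t<k. \<delta> * (1 - \<delta>) ^ t * (E t - E k))"
proof -
  have geometric: "1 - (1 - \<delta>) ^ k = (\<Sum>t<k. \<delta> * (1 - \<delta>) ^ t)"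
    using one_diff_power_eq[of "1 - \<delta>" k] by (simp add: sum_distrib_left)
  have "(1 - \<delta>) ^ k * E k - E k = - ((1 - (1 - \<delta>) ^ k) * E k)"
    by (simp add: algebra_simps)
  also have "\<dots> = - (\<Sum>t<k. \<delta> * (1 - \<delta>) ^ t * E k)"
    by (simp only: geometric sum_distrib_right)
  finally show ?thesis
    unfolding discounted_cost_def by (simp add: algebra_simps sum_subtractf)
qed

lemma abs_discounted_cost_minus_le:
  assumes "0 \<le> \<delta>" "\<delta> \<le> 1" and "\<And>t. 0 \<le> E t" "\<And>t. E t \<le> B"
  shows "\<bar>discounted_cost \<delta> k E - E k\<bar> \<le> real k * \<delta> * B"
proof -
  have "\<bar>\<delta> * (1 - \<delta>) ^ t * (E t - E k)\<bar> \<le> \<delta> * B" for t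
  proof -
    have "\<bar>\<delta> * (1 - \<delta>) ^ t * (E t - E k)\<bar> = \<delta> * (1 - \<delta>) ^ t * \<bar>E t - E k\<bar>"
      using assms by (simp add: abs_mult)
    also have "\<dots> \<le> \<delta> * 1 * B"
      using assms(1,2) assms(3,4)[of t] assms(3,4)[of k]
      by (intro mult_mono power_le_one) (auto simp: abs_le_iff)
    finally show ?thesis by simp
  qed
  then have "\<bar>\<Sum>t<k. \<delta> * (1 - \<delta>) ^ t * (E t - E k)\<bar> \<le> (\<Sum>t<k. \<delta> * B)"
    by (intro order_trans[OF sum_abs] sum_mono)
  then show ?thesis by (simp add: discounted_cost_minus_eq)
qed

lemma abs_cINF_diff_le:
  fixes f g :: "'p \<Rightarrow> real"
  assumes "S \<noteq> {}" and "bdd_below (g ` S)" and close: "\<And>p. p \<in> S \<Longrightarrow> \<bar>f p - g p\<bar> \<le> e"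
  shows "\<bar>(INF p\<in>S. f p) - (INF p\<in>S. g p)\<bar> \<le> e"
proof -
  have g_le_f: "(INF p\<in>S. g p) - e \<le> f p" if "p \<in> S" for p
    using cINF_lower[OF assms(2) that] close[OF that] by linarith
  then have f_bdd: "bdd_below (f ` S)"
    by (intro bdd_belowI2)
  have "(INF p\<in>S. f p) - e \<le> g p" if "p \<in> S" for p
    using cINF_lower[OF f_bdd that] close[OF that] by linarith
  then have "(INF p\<in>S. f p) - e \<le> (INF p\<in>S. g p)"
    using \<open>S \<noteq> {}\<close> by (intro cINF_greatest)
  moreover have "(INF p\<in>S. g p) - e \<le> (INF p\<in>S. f p)"
    using \<open>S \<noteq> {}\<close> g_le_f by (intro cINF_greatest)
  ultimately show ?thesis by linarith
qed

lemma product_coupling_in_markov_couplings: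
  "(pair_pmf \<nu>X \<nu>Y, \<lambda>t (x, y). pair_pmf (mX x) (mY y)) \<in> markov_couplings mX \<nu>X mY \<nu>Y"
  unfolding markov_couplings_def couplings_def
  by (simp add: map_fst_pair_pmf map_snd_pair_pmf)

lemma markov_couplings_nonempty: "markov_couplings mX \<nu>X mY \<nu>Y \<noteq> {}"
  using product_coupling_in_markov_couplings by blast

lemma exp_cost_nonneg:
  assumes "\<And>x y. 0 \<le> C x y"
  shows "0 \<le> exp_cost C \<pi>0 K t"
  unfolding exp_cost_def using assms
  by (intro Bochner_Integration.integral_nonneg) (auto split: prod.splits)

lemma exp_cost_le:
  assumes "\<And>x y. 0 \<le> C x y" "\<And>x y. C x y \<le> B"
  shows "exp_cost C \<pi>0 K t \<le> B"
  unfolding exp_cost_def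
proof (rule measure_pmf.integral_le_const)
  show "integrable (measure_pmf (coupling_law \<pi>0 K t)) (\<lambda>(x, y). C x y)"
    using assms by (intro measure_pmf.integrable_const_bound[where B = B]) (auto split: prod.splits)
qed (use assms in \<open>auto split: prod.splits\<close>)

lemma bdd_below_exp_cost:
  assumes "\<And>x y. 0 \<le> C x y"
  shows "bdd_below ((\<lambda>p. exp_cost C (fst p) (snd p) k) ` S)"
  using exp_cost_nonneg[of C, OF assms] by (intro bdd_belowI2)

lemma dWL_delta_eq_INF_discounted_cost:
  "dWL_delta \<delta> k mX \<nu>X mY \<nu>Y C =
     (INF p \<in> markov_couplings mX \<nu>X mY \<nu>Y. discounted_cost \<delta> k (exp_cost C (fst p) (snd p)))"
  by (simp add: dWL_delta_def discounted_cost_def)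

lemma abs_dWL_delta_minus_dWL_le:
  assumes "\<And>x y. 0 \<le> C x y" "\<And>x y. C x y \<le> B" and "0 \<le> \<delta>" "\<delta> \<le> 1"
  shows "\<bar>dWL_delta \<delta> k mX \<nu>X mY \<nu>Y C - dWL k mX \<nu>X mY \<nu>Y C\<bar> \<le> real k * \<delta> * B"
  unfolding dWL_delta_eq_INF_discounted_cost dWL_def
  using assms exp_cost_nonneg[of C, OF assms(1)] exp_cost_le[of C B, OF assms(1,2)]
  by (intro abs_cINF_diff_le markov_couplings_nonempty bdd_below_exp_cost abs_discounted_cost_minus_le)

lemma dWL_delta_tendsto_dWL:
  assumes "\<And>x y. 0 \<le> C x y" "\<And>x y. C x y \<le> B"
  shows "((\<lambda>\<delta>. dWL_delta \<delta> k mX \<nu>X mY \<nu>Y C) \<longlongrightarrow> dWL k mX \<nu>X mY \<nu>Y C) (at_right 0)"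
proof -
  have "eventually (\<lambda>\<delta>::real. 0 < \<delta> \<and> \<delta> < 1) (at_right 0)"
    by (auto simp: eventually_at_right_field intro: exI[of _ 1])
  then have "eventually (\<lambda>\<delta>. norm (dWL_delta \<delta> k mX \<nu>X mY \<nu>Y C - dWL k mX \<nu>X mY \<nu>Y C)
      \<le> real k * \<delta> * B) (at_right 0)"
    by eventually_elim (simp add: abs_dWL_delta_minus_dWL_le[of C B, OF assms])
  moreover have "((\<lambda>\<delta>. real k * \<delta> * B) \<longlongrightarrow> 0) (at_right 0)"
    by (auto intro!: tendsto_eq_intros)
  ultimately show ?thesis
    by (subst LIM_zero_iff[symmetric]) (rule Lim_null_comparison)
qed

lemma bind_pmf_in_couplings:
  assumes "\<pi> \<in> couplings \<alpha> \<beta>" and "\<And>x y. K (x, y) \<in> couplings (mX x) (mY y)"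
  shows "bind_pmf \<pi> K \<in> couplings (bind_pmf \<alpha> mX) (bind_pmf \<beta> mY)"
proof -
  have "map_pmf fst (bind_pmf \<pi> K) = bind_pmf \<pi> (\<lambda>z. mX (fst z))"
    "map_pmf snd (bind_pmf \<pi> K) = bind_pmf \<pi> (\<lambda>z. mY (snd z))"
    using assms(2) unfolding map_bind_pmf couplings_def
    by (auto intro!: bind_pmf_cong split: prod.splits)
  then show ?thesis
    using assms(1) unfolding couplings_def by (auto simp: bind_map_pmf[symmetric])
qed

lemma markov_coupling_shift:
  assumes "stationary mX \<nu>X" "stationary mY \<nu>Y"
    and "(\<pi>0, K) \<in> markov_couplings mX \<nu>X mY \<nu>Y"
  shows "(bind_pmf \<pi>0 (K 0), \<lambda>t. K (Suc t)) \<in> markov_couplings mX \<nu>X mY \<nu>Y"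
  using bind_pmf_in_couplings[of \<pi>0 \<nu>X \<nu>Y "K 0" mX mY] assms
  unfolding markov_couplings_def stationary_def by auto

lemma coupling_law_shift:
  "coupling_law (bind_pmf \<pi>0 (K 0)) (\<lambda>t. K (Suc t)) k = coupling_law \<pi>0 K (Suc k)"
  by (induction k) simp_all

lemma dWL_le_dWL_Suc:
  assumes "\<And>x y. 0 \<le> C x y" and "stationary mX \<nu>X" "stationary mY \<nu>Y"
  shows "dWL k mX \<nu>X mY \<nu>Y C \<le> dWL (Suc k) mX \<nu>X mY \<nu>Y C"
  unfolding dWL_def
proof (rule cINF_greatest[OF markov_couplings_nonempty])
  fix p assume p: "p \<in> markov_couplings mX \<nu>X mY \<nu>Y"
  obtain \<pi>0 K where p_eq: "p = (\<pi>0, K)" by fastforce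
  have "(INF q\<in>markov_couplings mX \<nu>X mY \<nu>Y. exp_cost C (fst q) (snd q) k)
      \<le> exp_cost C (bind_pmf \<pi>0 (K 0)) (\<lambda>t. K (Suc t)) k"
    using cINF_lower[OF bdd_below_exp_cost[of C, OF assms(1)] markov_coupling_shift[OF assms(2,3)]] p p_eq
    by simp
  also have "\<dots> = exp_cost C (fst p) (snd p) (Suc k)"
    unfolding exp_cost_def p_eq by (simp add: coupling_law_shift)
  finally show "(INF q\<in>markov_couplings mX \<nu>X mY \<nu>Y. exp_cost C (fst q) (snd q) k)
      \<le> exp_cost C (fst p) (snd p) (Suc k)" .
qed

lemma dWL_le:
  assumes "\<And>x y. 0 \<le> C x y" "\<And>x y. C x y \<le> B"
  shows "dWL k mX \<nu>X mY \<nu>Y C \<le> B"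
  unfolding dWL_def
  using cINF_lower[OF bdd_below_exp_cost[of C, OF assms(1)] product_coupling_in_markov_couplings]
    exp_cost_le[of C B, OF assms]
  by (meson order_trans)

theorem theorem15:
  fixes mX :: "'a::finite \<Rightarrow> 'a pmf" and \<nu>X :: "'a pmf"
    and mY :: "'b::finite \<Rightarrow> 'b pmf" and \<nu>Y :: "'b pmf"
    and C :: "'a \<Rightarrow> 'b \<Rightarrow> real"
  assumes C_nonneg: "\<And>x y. C x y \<ge> 0"
  shows "(\<forall>k. ((\<lambda>\<delta>. dWL_delta \<delta> k mX \<nu>X mY \<nu>Y C) \<longlongrightarrow> dWL k mX \<nu>X mY \<nu>Y C) (at_right 0))
       \<and> (stationary mX \<nu>X \<and> stationary mY \<nu>Y \<longrightarrow>
           (\<lambda>k. Lim (at_right 0) (\<lambda>\<delta>. dWL_delta \<delta> k mX \<nu>X mY \<nu>Y C))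
             \<longlonglongrightarrow> dWL_inf mX \<nu>X mY \<nu>Y C)"
proof -
  define B where "B = Max (range (case_prod C))"
  have C_le: "C x y \<le> B" for x y
    unfolding B_def by (rule Max_ge) (auto intro: range_eqI[of _ _ "(x, y)"])
  note tendsto = dWL_delta_tendsto_dWL[of C B, OF C_nonneg C_le]
  have "(\<lambda>k. dWL k mX \<nu>X mY \<nu>Y C) \<longlonglongrightarrow> dWL_inf mX \<nu>X mY \<nu>Y C"
    if "stationary mX \<nu>X" "stationary mY \<nu>Y"
    unfolding dWL_inf_def
    using dWL_le_dWL_Suc[of C, OF C_nonneg that] dWL_le[of C B, OF C_nonneg C_le]
    by (intro LIMSEQ_incseq_SUP incseq_SucI bdd_aboveI) auto
  moreover have "Lim (at_right 0) (\<lambda>\<delta>. dWL_delta \<delta> k mX \<nu>X mY \<nu>Y C) = dWL k mX \<nu>X mY \<nu>Y C" for k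
    using tendsto by (intro tendsto_Lim) simp_all
  ultimately show ?thesis
    using tendsto by simp
qed

end
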